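(* Let $(\mathbf f,\mathbf g),(\mathbf f',\mathbf g'),(\mathbf f^*,\mathbf g^* )$ be models with $(\mathbf f,\mathbf g)\sim_L(\mathbf f^*,\mathbf g^* )$. Fix labels $y_1,\dots,y_M\in\mathcal Y$ and inputs $x_1,\dots,x_M\in\mathcal X$, and let $\mathbf L,\mathbf L^*,\mathbf L'$ be the matrices with columns $\mathbf g_0(y_i)$, $\mathbf g^*_0(y_i)$, $\mathbf g'_0(y_i)$ ($i=1,\dots,M$) and $\mathbf N,\mathbf N^*,\mathbf N'$ the matrices with columns $\mathbf f_0(x_i)$, $\mathbf f^*_0(x_i)$, $\mathbf f'_0(x_i)$. With $x\sim p_{\mathcal D}$ and $y$ uniform on $\mathcal Y$, and assuming the quantities below are defined (all components of finite positive variance), $$d_{\mathrm{SVD}}(\mathbf L^\top\mathbf f(x),\mathbf L'^\top\mathbf f'(x))=d_{\mathrm{SVD}}(\mathbf L^{*\top}\mathbf f^*(x),\mathbf L'^\top\mathbf f'(x)),$$ $$d_{\mathrm{SVD}}(\mathbf N^\top\mathbf g(y),\mathbf N'^\top\mathbf g'(y))=d_{\mathrm{SVD}}(\mathbf N^{*\top}\mathbf g^*(y),\mathbf N'^\top\mathbf g'(y)).$$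
   Context: Let $\mathcal X$ be a set of inputs and $\mathcal Y$ a finite set of labels; fix $M\ge1$ and a probability distribution $p_{\mathcal D}$ on $\mathcal X$. A model is a pair $(\mathbf f,\mathbf g)$ of functions $\mathbf f:\mathcal X\to\mathbb R^M$, $\mathbf g:\mathcal Y\to\mathbb R^M$ defining $p_{\mathbf f,\mathbf g}(y\mid x)=\exp(\mathbf f(x)^\top\mathbf g(y))/\sum_{y'\in\mathcal Y}\exp(\mathbf f(x)^\top\mathbf g(y'))$. With pivot input $x_0$ and pivot label $y_0$, write $\mathbf f_0(x)=\mathbf f(x)-\mathbf f(x_0)$, $\mathbf g_0(y)=\mathbf g(y)-\mathbf g(y_0)$ (similarly for other models). The relation $(\mathbf f,\mathbf g)\sim_L(\mathbf f^*,\mathbf g^* )$ holds iff there is an invertible $\mathbf A\in\mathbb R^{M\times M}$ with $\mathbf f(x)=\mathbf A\mathbf f^*(x)$ for all $x$ and $\mathbf g_0(y)=\mathbf A^{-\top}\mathbf g^*_0(y)$ for all $y$. For $M$-dimensional random vectors $\mathbf z,\mathbf w$ (jointly distributed, components with finite positive variance), let $\mathbf z',\mathbf w'$ be the standardized vectors $z'_i=(z_i-\mathbb E[z_i])/\operatorname{std}(z_i)$, $w'_i=(w_i-\mathbb E[w_i])/\operatorname{std}(w_i)$, and let $\boldsymbol\Sigma_{\mathbf z'\mathbf w'}$ be the cross-covariance matrix with entries $\mathrm{Cov}[z'_i,w'_j]$. Let $\{\mathbf u_i\}_{i=1}^M$, $\{\mathbf v_i\}_{i=1}^M$ be the left and right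 singular vectors of $\boldsymbol\Sigma_{\mathbf z'\mathbf w'}$. Define $m_{\mathrm{SVD}}(\mathbf z,\mathbf w)=\frac1M\sum_{i=1}^M\mathrm{Cov}[\mathbf u_i^\top\mathbf z',\mathbf v_i^\top\mathbf w']$ (equivalently, $\frac1M$ times the sum of the singular values of $\boldsymbol\Sigma_{\mathbf z'\mathbf w'}$) and $d_{\mathrm{SVD}}(\mathbf z,\mathbf w)=1-m_{\mathrm{SVD}}(\mathbf z,\mathbf w)$. *)

theory Defs
  imports "HOL-Analysis.Analysis" "HOL-Probability.Probability"
begin

text \<open>Centering at pivot input x0 / pivot label y0.\<close>
definition center :: "('a \<Rightarrow> real^'m) \<Rightarrow> 'a \<Rightarrow> 'a \<Rightarrow> real^'m" where
  "center h a0 a = h a - h a0"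

definition sim_L ::
  "'x \<Rightarrow> 'y \<Rightarrow> ('x \<Rightarrow> real^'m) \<Rightarrow> ('y \<Rightarrow> real^'m)
   \<Rightarrow> ('x \<Rightarrow> real^'m) \<Rightarrow> ('y \<Rightarrow> real^'m) \<Rightarrow> bool" where
  "sim_L x0 y0 f g fs gs \<longleftrightarrow>
     (\<exists>A :: real^'m^'m. invertible A \<and>
        (\<forall>x. f x = A *v fs x) \<and>
        (\<forall>y. center g y0 y = transpose (matrix_inv A) *v center gs y0 y))"

definition col_matrix :: "('m \<Rightarrow> real^'m) \<Rightarrow> real^'m^'m" where
  "col_matrix v = (\<chi> r i. v i $ r)"

definition mean :: "'a measure \<Rightarrow> ('a \<Rightarrow> real) \<Rightarrow> real" where
  "mean M a = (\<integral>\<omega>. a \<omega> \<partial>M)"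

definition cov :: "'a measure \<Rightarrow> ('a \<Rightarrow> real) \<Rightarrow> ('a \<Rightarrow> real) \<Rightarrow> real" where
  "cov M a b = (\<integral>\<omega>. (a \<omega> - mean M a) * (b \<omega> - mean M b) \<partial>M)"

definition var :: "'a measure \<Rightarrow> ('a \<Rightarrow> real) \<Rightarrow> real" where
  "var M a = cov M a a"

definition finite_pos_var :: "'a measure \<Rightarrow> ('a \<Rightarrow> real^'m) \<Rightarrow> bool" where
  "finite_pos_var M z \<longleftrightarrow>
     (\<forall>i. (\<lambda>\<omega>. z \<omega> $ i) \<in> borel_measurable M \<and>
          integrable M (\<lambda>\<omega>. (z \<omega> $ i)\<^sup>2) \<and>
          var M (\<lambda>\<omega>. z \<omega> $ i) > 0)"

definition standardize :: "'a measure \<Rightarrow> ('a \<Rightarrow> real^'m) \<Rightarrow> 'a \<Rightarrow> real^'m" where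
  "standardize M z \<omega> =
     (\<chi> i. (z \<omega> $ i - mean M (\<lambda>\<eta>. z \<eta> $ i)) / sqrt (var M (\<lambda>\<eta>. z \<eta> $ i)))"

definition cross_cov :: "'a measure \<Rightarrow> ('a \<Rightarrow> real^'m) \<Rightarrow> ('a \<Rightarrow> real^'m) \<Rightarrow> real^'m^'m" where
  "cross_cov M z w =
     (\<chi> i j. cov M (\<lambda>\<omega>. standardize M z \<omega> $ i) (\<lambda>\<omega>. standardize M w \<omega> $ j))"

definition diag_mat :: "('m \<Rightarrow> real) \<Rightarrow> real^'m^'m" where
  "diag_mat d = (\<chi> i j. if i = j then d i else 0)"

definition m_SVD :: "'a measure \<Rightarrow> ('a \<Rightarrow> real^'m) \<Rightarrow> ('a \<Rightarrow> real^'m) \<Rightarrow> real" where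
  "m_SVD M z w =
     (THE s. \<exists>(U::real^'m^'m) (V::real^'m^'m) d.
        orthogonal_matrix U \<and> orthogonal_matrix V \<and> (\<forall>i. 0 \<le> d i) \<and>
        cross_cov M z w = U ** diag_mat d ** transpose V \<and>
        s = (1 / real CARD('m)) *
            (\<Sum>i\<in>UNIV. cov M (\<lambda>\<omega>. column i U \<bullet> standardize M z \<omega>)
                             (\<lambda>\<omega>. column i V \<bullet> standardize M w \<omega>)))"

definition d_SVD :: "'a measure \<Rightarrow> ('a \<Rightarrow> real^'m) \<Rightarrow> ('a \<Rightarrow> real^'m) \<Rightarrow> real" where
  "d_SVD M z w = 1 - m_SVD M z w"

definition unif_labels :: "'y::finite measure" where
  "unif_labels = measure_pmf (pmf_of_set UNIV)"

end

theory Submission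
  imports Defs
begin

text \<open>
  Write the equivalence as \<open>f = A f\<^sup>*\<close> and \<open>g\<^sub>0 = A\<^sup>-\<^sup>T g\<^sup>*\<^sub>0\<close>. Then \<open>L = A\<^sup>-\<^sup>T L\<^sup>*\<close>, so
  \<open>L\<^sup>T f = L\<^sup>*\<^sup>T A\<^sup>-\<^sup>1 A f\<^sup>* = L\<^sup>*\<^sup>T f\<^sup>*\<close> as functions, and the first identity holds because both
  sides compare the same random vector. Likewise \<open>N = A N\<^sup>*\<close>, so
  \<open>N\<^sup>T g(y) = N\<^sup>*\<^sup>T A\<^sup>T g(y\<^sub>0) + N\<^sup>*\<^sup>T g\<^sup>*\<^sub>0(y)\<close>, which differs from \<open>N\<^sup>*\<^sup>T g\<^sup>*(y)\<close> by a constant vector;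
  standardization removes constant shifts, and \<open>d\<^sub>S\<^sub>V\<^sub>D\<close> only sees the standardized vectors.
\<close>

lemma matrix_inv_mult_left:
  fixes A :: "'a::semiring_1^'n^'m"
  assumes "invertible A"
  shows "matrix_inv A ** A = mat 1"
  using someI_ex[OF assms[unfolded invertible_def]] unfolding matrix_inv_def by blast

lemma col_matrix_matrix_vector_mult: "col_matrix (\<lambda>i. B *v v i) = B ** col_matrix v"
  by (simp add: vec_eq_iff col_matrix_def matrix_matrix_mult_def matrix_vector_mult_def)

lemma standardize_add_const:
  assumes "prob_space M" and "\<And>i. integrable M (\<lambda>\<omega>. z \<omega> $ i)"
  shows "standardize M (\<lambda>\<omega>. z \<omega> + c) = standardize M z"
proof -
  interpret prob_space M by fact
  have mean: "mean M (\<lambda>\<omega>. z \<omega> $ i + c $ i) = mean M (\<lambda>\<omega>. z \<omega> $ i) + c $ i" for i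
    using assms(2)[of i] by (simp add: mean_def prob_space)
  have var: "var M (\<lambda>\<omega>. z \<omega> $ i + c $ i) = var M (\<lambda>\<omega>. z \<omega> $ i)" for i
    by (simp add: var_def cov_def mean)
  show ?thesis
    by (rule ext) (simp add: standardize_def mean var vec_eq_iff)
qed

lemma d_SVD_standardize_cong:
  assumes "standardize M z' = standardize M z"
  shows "d_SVD M z' w = d_SVD M z w"
  unfolding d_SVD_def m_SVD_def cross_cov_def assms ..

lemma d_SVD_add_const_left:
  assumes "prob_space M" and "\<And>i. integrable M (\<lambda>\<omega>. z \<omega> $ i)"
  shows "d_SVD M (\<lambda>\<omega>. z \<omega> + c) w = d_SVD M z w"
  by (rule d_SVD_standardize_cong[OF standardize_add_const[OF assms]])

lemma prob_space_unif_labels: "prob_space unif_labels"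
  unfolding unif_labels_def by (rule prob_space_measure_pmf)

lemma integrable_unif_labels: "integrable unif_labels (h :: 'y::finite \<Rightarrow> real)"
  unfolding unif_labels_def by (rule integrable_measure_pmf_finite) (simp add: set_pmf_of_set)

lemma sim_L_label_projection_eq:
  assumes "sim_L x0 y0 f g fs gs"
  shows "transpose (col_matrix (\<lambda>i. center g y0 (ys i))) *v f x =
         transpose (col_matrix (\<lambda>i. center gs y0 (ys i))) *v fs x"
proof -
  obtain A where A: "invertible A" "\<And>x. f x = A *v fs x"
    "\<And>y. center g y0 y = transpose (matrix_inv A) *v center gs y0 y"
    using assms unfolding sim_L_def by blast
  let ?Ls = "col_matrix (\<lambda>i. center gs y0 (ys i))"
  have "col_matrix (\<lambda>i. center g y0 (ys i)) = transpose (matrix_inv A) ** ?Ls"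
    unfolding A(3) col_matrix_matrix_vector_mult ..
  then have "transpose (col_matrix (\<lambda>i. center g y0 (ys i))) *v f x =
             (transpose ?Ls ** (matrix_inv A ** A)) *v fs x"
    by (simp add: A(2) matrix_transpose_mul matrix_vector_mul_assoc matrix_mul_assoc)
  then show ?thesis
    by (simp add: matrix_inv_mult_left[OF A(1)])
qed

lemma sim_L_input_projection_shift:
  assumes "sim_L x0 y0 f g fs gs"
  obtains c where "\<And>y. transpose (col_matrix (\<lambda>i. center f x0 (xs i))) *v g y =
                       transpose (col_matrix (\<lambda>i. center fs x0 (xs i))) *v gs y + c"
proof -
  obtain A where A: "invertible A" "\<And>x. f x = A *v fs x"
    "\<And>y. center g y0 y = transpose (matrix_inv A) *v center gs y0 y"
    using assms unfolding sim_L_def by blast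
  let ?Ns = "col_matrix (\<lambda>i. center fs x0 (xs i))"
  have AT_inv: "transpose A ** transpose (matrix_inv A) = mat 1"
    by (metis matrix_inv_mult_left[OF A(1)] matrix_transpose_mul transpose_mat)
  have center_f: "center f x0 x = A *v center fs x0 x" for x
    by (simp add: center_def A(2) matrix_vector_mult_diff_distrib)
  have N: "col_matrix (\<lambda>i. center f x0 (xs i)) = A ** ?Ns"
    unfolding center_f col_matrix_matrix_vector_mult ..
  have g: "g y = g y0 + transpose (matrix_inv A) *v center gs y0 y" for y
    using A(3)[of y] by (simp add: center_def algebra_simps)
  define c where "c = transpose A *v g y0 - gs y0"
  have g_shift: "transpose A *v g y = gs y + c" for y
  proof -
    have "transpose A *v g y =
          transpose A *v g y0 + (transpose A ** transpose (matrix_inv A)) *v center gs y0 y"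
      by (subst g) (simp only: matrix_vector_right_distrib matrix_vector_mul_assoc)
    then show ?thesis
      by (simp add: AT_inv center_def c_def)
  qed
  have "transpose (col_matrix (\<lambda>i. center f x0 (xs i))) *v g y =
        transpose ?Ns *v gs y + transpose ?Ns *v c" for y
  proof -
    have "transpose (col_matrix (\<lambda>i. center f x0 (xs i))) *v g y = transpose ?Ns *v (transpose A *v g y)"
      by (simp only: N matrix_transpose_mul matrix_vector_mul_assoc)
    then show ?thesis
      by (simp only: g_shift matrix_vector_right_distrib)
  qed
  then show ?thesis
    using that by blast
qed

theorem mainTheorem11:
  fixes D :: "'x measure"
    and x0 :: 'x and y0 :: "'y::finite"
    and f f' fs :: "'x \<Rightarrow> real^'m"
    and g g' gs :: "'y \<Rightarrow> real^'m"
    and ys :: "'m \<Rightarrow> 'y" and xs :: "'m \<Rightarrow> 'x"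
  assumes "prob_space D" and "space D = UNIV"
    and "sim_L x0 y0 f g fs gs"
  defines "L \<equiv> col_matrix (\<lambda>i. center g y0 (ys i))"
    and "Ls \<equiv> col_matrix (\<lambda>i. center gs y0 (ys i))"
    and "L' \<equiv> col_matrix (\<lambda>i. center g' y0 (ys i))"
    and "N \<equiv> col_matrix (\<lambda>i. center f x0 (xs i))"
    and "Ns \<equiv> col_matrix (\<lambda>i. center fs x0 (xs i))"
    and "N' \<equiv> col_matrix (\<lambda>i. center f' x0 (xs i))"
  assumes "finite_pos_var D (\<lambda>x. transpose L *v f x)"
    and "finite_pos_var D (\<lambda>x. transpose Ls *v fs x)"
    and "finite_pos_var D (\<lambda>x. transpose L' *v f' x)"
    and "finite_pos_var unif_labels (\<lambda>y. transpose N *v g y)"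
    and "finite_pos_var unif_labels (\<lambda>y. transpose Ns *v gs y)"
    and "finite_pos_var unif_labels (\<lambda>y. transpose N' *v g' y)"
  shows "d_SVD D (\<lambda>x. transpose L *v f x) (\<lambda>x. transpose L' *v f' x) =
         d_SVD D (\<lambda>x. transpose Ls *v fs x) (\<lambda>x. transpose L' *v f' x) \<and>
         d_SVD unif_labels (\<lambda>y. transpose N *v g y) (\<lambda>y. transpose N' *v g' y) =
         d_SVD unif_labels (\<lambda>y. transpose Ns *v gs y) (\<lambda>y. transpose N' *v g' y)"
proof
  have "(\<lambda>x. transpose L *v f x) = (\<lambda>x. transpose Ls *v fs x)"
    unfolding L_def Ls_def using sim_L_label_projection_eq[OF assms(3)] by blast
  then show "d_SVD D (\<lambda>x. transpose L *v f x) (\<lambda>x. transpose L' *v f' x) =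
             d_SVD D (\<lambda>x. transpose Ls *v fs x) (\<lambda>x. transpose L' *v f' x)"
    by simp
next
  obtain c where "\<And>y. transpose N *v g y = transpose Ns *v gs y + c"
    unfolding N_def Ns_def using sim_L_input_projection_shift[OF assms(3)] by blast
  then show "d_SVD unif_labels (\<lambda>y. transpose N *v g y) (\<lambda>y. transpose N' *v g' y) =
             d_SVD unif_labels (\<lambda>y. transpose Ns *v gs y) (\<lambda>y. transpose N' *v g' y)"
    by (simp add: d_SVD_add_const_left[OF prob_space_unif_labels integrable_unif_labels])
qed

end
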